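(* Let $M\in\mathbb{R}^{2n\times 2n}$ be symmetric positive definite, let $1\le k\le n$, and let $J_{2m}=\left[\begin{smallmatrix}0&I_m\\-I_m&0\end{smallmatrix}\right]$. Let $\tilde N=\operatorname{diag}(N,N)$ with $N=\operatorname{diag}(\nu_1,\ldots,\nu_k)$, $0<\nu_1<\nu_2<\cdots<\nu_k$. Consider the problem $$\min_{X\in\mathbb{R}^{2n\times 2k}} f(X):=\operatorname{tr}(\tilde N X^TMX)\quad\text{s.t.}\quad X^TJ_{2n}X=J_{2k}.$$ A matrix $X\in\mathbb{R}^{2n\times 2k}$ is a critical point of this problem (i.e. $X^TJ_{2n}X=J_{2k}$ and there is a skew-symmetric $L\in\mathbb{R}^{2k\times 2k}$ with $MX\tilde N=J_{2n}XL$) if and only if its columns form a symplectic eigenvector set of $M$, i.e. $X^TJ_{2n}X=J_{2k}$ and $$MX=J_{2n}X\begin{bmatrix}0&-\Delta\\ \Delta&0\end{bmatrix}$$ for some diagonal matrix $\Delta=\operatorname{diag}(d_{i_1},\ldots,d_{i_k})$ whose entries are symplectic eigenvalues of $M$ (indices $i_1,\ldots,i_k$ from $\{1,\ldots,n\}$).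
   Context: Symplectic eigenvalues are in the sense of Williamson's theorem: there is a symplectic $S$ ($S^TJ_{2n}S=J_{2n}$) with $S^TMS=\operatorname{diag}(D,D)$, $D=\operatorname{diag}(d_1,\ldots,d_n)$, $d_j>0$; the column pairs $[s_j,s_{n+j}]$ are symplectic eigenvectors associated with $d_j$. In the critical case one has $X^TMX=\operatorname{diag}(\Delta,\Delta)$ and Lagrange multiplier $L=\left[\begin{smallmatrix}0&-\Delta N\\ \Delta N&0\end{smallmatrix}\right]$. *)

theory Defs
  imports "Jordan_Normal_Form.Matrix"
begin

definition Jmat :: "nat \<Rightarrow> real mat" where
  "Jmat m = four_block_mat (0\<^sub>m m m) (1\<^sub>m m) (- 1\<^sub>m m) (0\<^sub>m m m)"

definition diag2 :: "real mat \<Rightarrow> real mat" where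
  "diag2 A = four_block_mat A (0\<^sub>m (dim_row A) (dim_col A)) (0\<^sub>m (dim_row A) (dim_col A)) A"

definition skew2 :: "real mat \<Rightarrow> real mat" where
  "skew2 A = four_block_mat (0\<^sub>m (dim_row A) (dim_col A)) (- A) A (0\<^sub>m (dim_row A) (dim_col A))"

definition sym_pos_def :: "nat \<Rightarrow> real mat \<Rightarrow> bool" where
  "sym_pos_def m M \<longleftrightarrow> M \<in> carrier_mat m m \<and> transpose_mat M = M \<and>
     (\<forall>v \<in> carrier_vec m. v \<noteq> 0\<^sub>v m \<longrightarrow> v \<bullet> (M *\<^sub>v v) > 0)"

definition symplectic :: "nat \<Rightarrow> real mat \<Rightarrow> bool" where
  "symplectic n S \<longleftrightarrow> S \<in> carrier_mat (2*n) (2*n) \<and> transpose_mat S * Jmat n * S = Jmat n"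

definition williamson :: "nat \<Rightarrow> real mat \<Rightarrow> real mat \<Rightarrow> real mat \<Rightarrow> bool" where
  "williamson n M S D \<longleftrightarrow> symplectic n S \<and> D \<in> carrier_mat n n \<and> diagonal_mat D \<and>
     (\<forall>j<n. D $$ (j,j) > 0) \<and> transpose_mat S * M * S = diag2 D"

definition symp_eigenvalue :: "nat \<Rightarrow> real mat \<Rightarrow> real \<Rightarrow> bool" where
  "symp_eigenvalue n M d \<longleftrightarrow> (\<exists>S D. williamson n M S D \<and> (\<exists>j<n. d = D $$ (j,j)))"

end

theory Submission
  imports Defs "Jordan_Normal_Form.Jordan_Normal_Form_Existence"
begin

(* For a critical point X the Gram matrix A = X^T M X is symmetric, and the constraint
   X^T J X = J turns the Lagrange equation M X diag(N, N) = J X L into A diag(N, N) = J L.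
   Skew-symmetry of L together with the positive, pairwise distinct nu_i forces
   A = diag(Delta, Delta) with Delta diagonal and L = [[0, -Delta N], [Delta N, 0]]; cancelling
   diag(N, N) gives M X = J X [[0, -Delta], [Delta, 0]].  The converse is the same computation
   read backwards.

   Columns j and j + k of such an X form a normalized symplectic eigenvector pair for Delta_jj,
   so what remains is the extension half of Williamson's theorem: every such pair occurs in a
   Williamson normal form of M.  The symplectic complement W of finitely many pairs is
   invariant under (J M)^2, which is self-adjoint and negative definite for the inner product
   given by M.  A deflated matrix that agrees with (J M)^2 on W and vanishes on the pairs is
   still M-self-adjoint, so by a Jordan normal form argument over the complex numbers it has a
   real eigenvector with nonzero eigenvalue; that eigenvector lies in W and yields the next
   pair. *)

section \<open>Self-adjoint matrices and real eigenvectors\<close>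

lemma scalar_prod_symmetric_mat:
  fixes K :: "'a :: comm_semiring_0 mat"
  assumes K: "K \<in> carrier_mat n n" and sym: "transpose_mat K = K"
    and a: "a \<in> carrier_vec n" and b: "b \<in> carrier_vec n"
  shows "a \<bullet> (K *\<^sub>v b) = b \<bullet> (K *\<^sub>v a)"
proof -
  have "a \<bullet> (K *\<^sub>v b) = (transpose_mat K *\<^sub>v a) \<bullet> b"
    using transpose_vec_mult_scalar[OF K b a] by simp
  also have "\<dots> = b \<bullet> (K *\<^sub>v a)"
    using sym K a b by (simp add: comm_scalar_prod[of _ n])
  finally show ?thesis .
qed

lemma mult_mat_zero_vec [simp]:
  "A \<in> carrier_mat nr nc \<Longrightarrow> A *\<^sub>v 0\<^sub>v nc = (0\<^sub>v nr :: 'a :: semiring_0 vec)"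
  by (intro eq_vecI) (auto simp: scalar_prod_def)

lemma index_transpose_mult_mult:
  assumes A: "A \<in> carrier_mat N N'" and B: "B \<in> carrier_mat N N" and a: "a < N'" and b: "b < N'"
  shows "(transpose_mat A * B * A) $$ (a, b) = col A a \<bullet> (B *\<^sub>v col A b)"
proof -
  have "transpose_mat A * B * A = transpose_mat A * (B * A)"
    using A B by (intro assoc_mult_mat[of _ N' N _ N _ N']) auto
  then show ?thesis using A B a b by (simp add: mult_mat_vec_def)
qed

lemma transpose_gram_mat:
  fixes X M :: "'a :: comm_semiring_0 mat"
  assumes X: "X \<in> carrier_mat N N'" and M: "M \<in> carrier_mat N N" and Ms: "transpose_mat M = M"
  shows "transpose_mat (transpose_mat X * M * X) = transpose_mat X * M * X"
proof (rule eq_matI)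
  fix a b assume "a < dim_row (transpose_mat X * M * X)" "b < dim_col (transpose_mat X * M * X)"
  then have a: "a < N'" and b: "b < N'" using X by auto
  show "transpose_mat (transpose_mat X * M * X) $$ (a, b) = (transpose_mat X * M * X) $$ (a, b)"
    using index_transpose_mult_mult[OF X M a b] index_transpose_mult_mult[OF X M b a] a b X
      scalar_prod_symmetric_mat[OF M Ms col_carrier_vec[OF a X] col_carrier_vec[OF b X]]
    by simp
qed (use X in auto)

lemma exists_nonzero_orthogonal_vec:
  fixes f :: "nat \<Rightarrow> 'a :: field vec"
  assumes r: "r < N" and f: "\<And>i. i < r \<Longrightarrow> f i \<in> carrier_vec N"
  obtains w where "w \<in> carrier_vec N" "w \<noteq> 0\<^sub>v N" "\<And>i. i < r \<Longrightarrow> f i \<bullet> w = 0"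
proof -
  define C where "C = mat N N (\<lambda>(i, j). if i < r then f i $ j else 0)"
  have C: "C \<in> carrier_mat N N" unfolding C_def by simp
  have "transpose_mat C *\<^sub>v unit_vec N (N - 1) = 0\<^sub>v N"
    using r unfolding C_def by (intro eq_vecI) auto
  moreover have "unit_vec N (N - 1) \<in> carrier_vec N" "unit_vec N (N - 1) \<noteq> (0\<^sub>v N :: 'a vec)"
    using r by auto
  ultimately have "\<exists>v. v \<in> carrier_vec N \<and> v \<noteq> 0\<^sub>v N \<and> transpose_mat C *\<^sub>v v = 0\<^sub>v N"
    by blast
  then have "det (transpose_mat C) = 0"
    using det_0_iff_vec_prod_zero_field[of "transpose_mat C" N] C by simp
  then obtain w where w: "w \<in> carrier_vec N" "w \<noteq> 0\<^sub>v N" "C *\<^sub>v w = 0\<^sub>v N"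
    using det_0_iff_vec_prod_zero_field[OF C] det_transpose[OF C] by auto
  have "f i \<bullet> w = 0" if i: "i < r" for i
  proof -
    have "row C i = f i" unfolding C_def using i r f[OF i] by (intro eq_vecI) auto
    then show ?thesis using arg_cong[OF w(3), of "\<lambda>v. v $ i"] i r C by simp
  qed
  then show ?thesis using that w by blast
qed

lemma sym_pos_defD:
  assumes "sym_pos_def n M"
  shows "M \<in> carrier_mat n n" "transpose_mat M = M"
    "\<And>v. v \<in> carrier_vec n \<Longrightarrow> v \<noteq> 0\<^sub>v n \<Longrightarrow> 0 < v \<bullet> (M *\<^sub>v v)"
  using assms unfolding sym_pos_def_def by auto

lemma sym_pos_def_nonneg:
  assumes "sym_pos_def n M" "v \<in> carrier_vec n"
  shows "0 \<le> v \<bullet> (M *\<^sub>v v)"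
  using sym_pos_defD[OF assms(1)] assms(2) by (cases "v = 0\<^sub>v n") force+

lemma sym_pos_def_scalar_prod_comm:
  assumes "sym_pos_def n M" "a \<in> carrier_vec n" "b \<in> carrier_vec n"
  shows "a \<bullet> (M *\<^sub>v b) = b \<bullet> (M *\<^sub>v a)"
  using scalar_prod_symmetric_mat sym_pos_defD(1,2)[OF assms(1)] assms(2,3) by blast

definition selfadjoint_wrt :: "nat \<Rightarrow> real mat \<Rightarrow> real mat \<Rightarrow> bool" where
  "selfadjoint_wrt n M E \<longleftrightarrow>
     (\<forall>x \<in> carrier_vec n. \<forall>y \<in> carrier_vec n. x \<bullet> (M *\<^sub>v (E *\<^sub>v y)) = y \<bullet> (M *\<^sub>v (E *\<^sub>v x)))"

lemma selfadjoint_wrtD: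
  "selfadjoint_wrt n M E \<Longrightarrow> x \<in> carrier_vec n \<Longrightarrow> y \<in> carrier_vec n \<Longrightarrow>
    x \<bullet> (M *\<^sub>v (E *\<^sub>v y)) = y \<bullet> (M *\<^sub>v (E *\<^sub>v x))"
  unfolding selfadjoint_wrt_def by blast

lemma selfadjoint_wrt_add:
  assumes A: "A \<in> carrier_mat N N" and B: "B \<in> carrier_mat N N" and M: "M \<in> carrier_mat N N"
    and "selfadjoint_wrt N M A" "selfadjoint_wrt N M B"
  shows "selfadjoint_wrt N M (A + B)"
  using assms unfolding selfadjoint_wrt_def
  by (simp add: add_mult_distrib_mat_vec[OF A B] mult_add_distrib_mat_vec[OF M]
      scalar_prod_add_distrib[of _ N])

definition outer_sum :: "nat \<Rightarrow> 'i set \<Rightarrow> ('i \<Rightarrow> 'a :: comm_semiring_0 vec) \<Rightarrow> ('i \<Rightarrow> 'a vec) \<Rightarrow> 'a mat"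
  where "outer_sum N I f g = mat N N (\<lambda>(a, b). \<Sum>i\<in>I. f i $ a * g i $ b)"

lemma outer_sum_carrier [simp]: "outer_sum N I f g \<in> carrier_mat N N"
  unfolding outer_sum_def by simp

lemma outer_sum_mult_vec:
  assumes "x \<in> carrier_vec N"
  shows "outer_sum N I f g *\<^sub>v x = vec N (\<lambda>a. \<Sum>i\<in>I. (g i \<bullet> x) * f i $ a)"
proof (rule eq_vecI)
  fix a assume "a < dim_vec (vec N (\<lambda>a. \<Sum>i\<in>I. (g i \<bullet> x) * f i $ a))"
  then have a: "a < N" by simp
  have "(outer_sum N I f g *\<^sub>v x) $ a = (\<Sum>b = 0..<N. \<Sum>i\<in>I. f i $ a * (g i $ b * x $ b))"
    using a assms by (simp add: outer_sum_def scalar_prod_def sum_distrib_right mult.assoc)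
  also have "\<dots> = (\<Sum>i\<in>I. (g i \<bullet> x) * f i $ a)"
    using assms by (subst sum.swap) (simp add: scalar_prod_def sum_distrib_left sum_distrib_right ac_simps)
  finally show "(outer_sum N I f g *\<^sub>v x) $ a = vec N (\<lambda>a. \<Sum>i\<in>I. (g i \<bullet> x) * f i $ a) $ a"
    using a by simp
qed (simp add: outer_sum_def)

lemma selfadjoint_outer_sum:
  assumes M: "M \<in> carrier_mat N N" and Ms: "transpose_mat M = M" and u: "\<And>i. i \<in> I \<Longrightarrow> u i \<in> carrier_vec N"
  shows "selfadjoint_wrt N M (outer_sum N I (\<lambda>i. c i \<cdot>\<^sub>v u i) (\<lambda>i. M *\<^sub>v u i))"
proof -
  let ?R = "outer_sum N I (\<lambda>i. c i \<cdot>\<^sub>v u i) (\<lambda>i. M *\<^sub>v u i)"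
  have "x \<bullet> (M *\<^sub>v (?R *\<^sub>v y)) = (\<Sum>i\<in>I. c i * (((M *\<^sub>v u i) \<bullet> x) * ((M *\<^sub>v u i) \<bullet> y)))"
    if x: "x \<in> carrier_vec N" and y: "y \<in> carrier_vec N" for x y
  proof -
    have Mux: "(M *\<^sub>v u i) \<bullet> x = (\<Sum>a = 0..<N. (M *\<^sub>v x) $ a * u i $ a)" if "i \<in> I" for i
      using scalar_prod_symmetric_mat[OF M Ms u[OF that] x] comm_scalar_prod[OF mult_mat_vec_carrier[OF M x] u[OF that]]
        M x u[OF that] comm_scalar_prod[OF mult_mat_vec_carrier[OF M u[OF that]] x]
      by (simp add: scalar_prod_def)
    have Ry: "?R *\<^sub>v y \<in> carrier_vec N"
      using y by (intro mult_mat_vec_carrier) auto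
    have "x \<bullet> (M *\<^sub>v (?R *\<^sub>v y)) = (M *\<^sub>v x) \<bullet> (?R *\<^sub>v y)"
      using scalar_prod_symmetric_mat[OF M Ms x Ry] comm_scalar_prod[OF Ry mult_mat_vec_carrier[OF M x]]
      by simp
    also have "\<dots> = (\<Sum>a = 0..<N. \<Sum>i\<in>I. (M *\<^sub>v x) $ a * (((M *\<^sub>v u i) \<bullet> y) * (c i * u i $ a)))"
    proof -
      have "(c i \<cdot>\<^sub>v u i) $ a = c i * u i $ a" if "i \<in> I" "a < N" for i a
        using u[OF that(1)] that(2) by simp
      then show ?thesis
        unfolding outer_sum_mult_vec[OF y] using M x
        by (auto simp: scalar_prod_def[of "M *\<^sub>v x"] sum_distrib_left intro!: sum.cong)
    qed
    also have "\<dots> = (\<Sum>i\<in>I. c i * ((M *\<^sub>v u i) \<bullet> y) * (\<Sum>a = 0..<N. (M *\<^sub>v x) $ a * u i $ a))"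
      by (subst sum.swap) (simp add: sum_distrib_left ac_simps)
    also have "\<dots> = (\<Sum>i\<in>I. c i * (((M *\<^sub>v u i) \<bullet> x) * ((M *\<^sub>v u i) \<bullet> y)))"
      using Mux by (intro sum.cong) auto
    finally show ?thesis .
  qed
  then show ?thesis
    unfolding selfadjoint_wrt_def by (simp add: ac_simps)
qed

lemma selfadjoint_square_zero_imp_zero:
  assumes M: "sym_pos_def n M" and E: "E \<in> carrier_mat n n" and sa: "selfadjoint_wrt n M E"
    and w: "w \<in> carrier_vec n" and EEw: "E *\<^sub>v (E *\<^sub>v w) = 0\<^sub>v n"
  shows "E *\<^sub>v w = 0\<^sub>v n"
proof (rule ccontr)
  assume ne: "E *\<^sub>v w \<noteq> 0\<^sub>v n"
  have Ew: "E *\<^sub>v w \<in> carrier_vec n" using E w by simp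
  have "(E *\<^sub>v w) \<bullet> (M *\<^sub>v (E *\<^sub>v w)) = w \<bullet> (M *\<^sub>v (E *\<^sub>v (E *\<^sub>v w)))"
    using selfadjoint_wrtD[OF sa Ew w] .
  also have "\<dots> = 0"
    using EEw w sym_pos_defD(1)[OF M] by simp
  finally show False using sym_pos_defD(3)[OF M Ew ne] by simp
qed

lemma selfadjoint_nilpotent_imp_zero:
  assumes M: "sym_pos_def n M" and E: "E \<in> carrier_mat n n" and sa: "selfadjoint_wrt n M E"
    and w: "w \<in> carrier_vec n" and "(E ^\<^sub>m j) *\<^sub>v (E *\<^sub>v w) = 0\<^sub>v n"
  shows "E *\<^sub>v w = 0\<^sub>v n"
  using w assms(5)
proof (induction j arbitrary: w)
  case 0
  then show ?case using E by simp
next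
  case (Suc j)
  have "(E ^\<^sub>m j) *\<^sub>v (E *\<^sub>v (E *\<^sub>v w)) = (E ^\<^sub>m Suc j) *\<^sub>v (E *\<^sub>v w)"
    using E Suc.prems(1) by (simp add: assoc_mult_mat_vec[of _ n n _ n])
  then have "E *\<^sub>v (E *\<^sub>v w) = 0\<^sub>v n"
    using Suc E by simp
  then show ?case
    using selfadjoint_square_zero_imp_zero[OF M E sa Suc.prems(1)] by blast
qed

lemma jordan_block_zero_pow_eq_zero:
  "m \<le> k \<Longrightarrow> jordan_block m (0 :: 'a :: field) ^\<^sub>m k = 0\<^sub>m m m"
  by (intro eq_matI) (auto simp: jordan_block_zero_pow)

lemma pow_eq_zero_if_eigenvalues_zero:
  fixes A :: "complex mat"
  assumes A: "A \<in> carrier_mat n n" and zero: "\<And>a. eigenvalue A a \<Longrightarrow> a = 0"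
  shows "A ^\<^sub>m n = 0\<^sub>m n n"
proof -
  obtain as where "char_poly A = (\<Prod>a\<leftarrow>as. [:- a, 1:])"
    using char_poly_factorized[OF A] by blast
  then obtain n_as where jnf: "jordan_nf A n_as"
    using jordan_nf_exists[OF A] by blast
  obtain P Q where PQ: "P \<in> carrier_mat n n" "Q \<in> carrier_mat n n"
    and cp: "char_poly A = (\<Prod>(m, a)\<leftarrow>n_as. [:- a, 1:] ^ m)"
    and pow: "\<And>k. A ^\<^sub>m k = P * (jordan_matrix n_as) ^\<^sub>m k * Q"
    using jordan_nf_powE[OF A jnf] by blast
  have dim: "sum_list (map fst n_as) = n"
    using jnf A similar_matD unfolding jordan_nf_def by fastforce
  have block_zero: "elements_mat (jordan_block m a ^\<^sub>m n) \<subseteq> {0}" if ma: "(m, a) \<in> set n_as" for m a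
  proof -
    have "m \<noteq> 0" using jnf ma unfolding jordan_nf_def by force
    then have "poly (char_poly A) a = 0"
      unfolding cp poly_prod_list prod_list_zero_iff using ma by (force simp: poly_power)
    then have "a = 0" using zero eigenvalue_root_char_poly[OF A] by blast
    moreover have "m \<le> n" using member_le_sum_list[of m "map fst n_as"] ma dim by force
    ultimately show ?thesis
      by (simp add: jordan_block_zero_pow_eq_zero elements_0_mat)
  qed
  have "elements_mat (jordan_matrix n_as ^\<^sub>m n) \<subseteq>
      {0} \<union> \<Union> (set (map elements_mat (map (\<lambda>(m, a). jordan_block m a ^\<^sub>m n) n_as)))"
    unfolding jordan_matrix_pow by (rule elements_diag_block_mat)
  also have "\<dots> \<subseteq> {0}"
    using block_zero by auto
  finally have "elements_mat (jordan_matrix n_as ^\<^sub>m n) \<subseteq> {0}" .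
  then have "jordan_matrix n_as ^\<^sub>m n = 0\<^sub>m n n"
    using dim by (intro eq_matI) (auto intro!: elements_matI[of _ n n])
  then show ?thesis using pow PQ by simp
qed

lemma eigenvector_real_imag_parts:
  fixes E :: "real mat" and v :: "complex vec"
  assumes E: "E \<in> carrier_mat n n" and v: "v \<in> carrier_vec n"
    and Ev: "map_mat complex_of_real E *\<^sub>v v = a \<cdot>\<^sub>v v"
  defines "x \<equiv> vec n (\<lambda>i. Re (v $ i))" and "y \<equiv> vec n (\<lambda>i. Im (v $ i))"
  shows "E *\<^sub>v x = Re a \<cdot>\<^sub>v x - Im a \<cdot>\<^sub>v y" and "E *\<^sub>v y = Im a \<cdot>\<^sub>v x + Re a \<cdot>\<^sub>v y"
proof -
  have row: "(\<Sum>j = 0..<n. complex_of_real (E $$ (i, j)) * v $ j) = a * v $ i" if "i < n" for i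
    using arg_cong[OF Ev, of "\<lambda>w. w $ i"] that E v by (simp add: scalar_prod_def)
  show "E *\<^sub>v x = Re a \<cdot>\<^sub>v x - Im a \<cdot>\<^sub>v y"
    using arg_cong[where f = Re, OF row] E by (intro eq_vecI) (simp_all add: scalar_prod_def x_def y_def Re_sum)
  show "E *\<^sub>v y = Im a \<cdot>\<^sub>v x + Re a \<cdot>\<^sub>v y"
    using arg_cong[where f = Im, OF row] E by (intro eq_vecI) (simp_all add: scalar_prod_def x_def y_def Im_sum)
qed

lemma selfadjoint_rotation_imp_real:
  assumes M: "sym_pos_def n M" and E: "E \<in> carrier_mat n n" and sa: "selfadjoint_wrt n M E"
    and x: "x \<in> carrier_vec n" and y: "y \<in> carrier_vec n" and xy: "x \<noteq> 0\<^sub>v n \<or> y \<noteq> 0\<^sub>v n"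
    and Ex: "E *\<^sub>v x = p \<cdot>\<^sub>v x - q \<cdot>\<^sub>v y" and Ey: "E *\<^sub>v y = q \<cdot>\<^sub>v x + p \<cdot>\<^sub>v y"
  shows "q = 0"
proof -
  note Mc = sym_pos_defD(1)[OF M]
  have "M *\<^sub>v (E *\<^sub>v y) = q \<cdot>\<^sub>v (M *\<^sub>v x) + p \<cdot>\<^sub>v (M *\<^sub>v y)"
    unfolding Ey using x y by (simp add: mult_add_distrib_mat_vec[OF Mc] mult_mat_vec[OF Mc])
  then have "x \<bullet> (M *\<^sub>v (E *\<^sub>v y)) = q * (x \<bullet> (M *\<^sub>v x)) + p * (x \<bullet> (M *\<^sub>v y))"
    using Mc x y by (simp add: scalar_prod_add_distrib[of _ n])
  moreover have "M *\<^sub>v (E *\<^sub>v x) = p \<cdot>\<^sub>v (M *\<^sub>v x) - q \<cdot>\<^sub>v (M *\<^sub>v y)"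
    unfolding Ex using x y by (simp add: mult_minus_distrib_mat_vec[OF Mc] mult_mat_vec[OF Mc])
  then have "y \<bullet> (M *\<^sub>v (E *\<^sub>v x)) = p * (y \<bullet> (M *\<^sub>v x)) - q * (y \<bullet> (M *\<^sub>v y))"
    using Mc x y by (simp add: scalar_prod_minus_distrib[of _ n])
  ultimately have "q * (x \<bullet> (M *\<^sub>v x) + y \<bullet> (M *\<^sub>v y)) = 0"
    using selfadjoint_wrtD[OF sa x y] sym_pos_def_scalar_prod_comm[OF M x y]
    by (simp add: algebra_simps)
  moreover have "0 < x \<bullet> (M *\<^sub>v x) + y \<bullet> (M *\<^sub>v y)"
    using xy sym_pos_defD(3)[OF M] sym_pos_def_nonneg[OF M] x y
    by (metis add_pos_nonneg add_nonneg_pos)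
  ultimately show ?thesis by simp
qed

lemma selfadjoint_nonzero_eigenvector:
  assumes M: "sym_pos_def n M" and E: "E \<in> carrier_mat n n" and sa: "selfadjoint_wrt n M E"
    and z0: "z0 \<in> carrier_vec n" "E *\<^sub>v z0 \<noteq> 0\<^sub>v n"
  obtains l z where "l \<noteq> 0" "z \<in> carrier_vec n" "z \<noteq> 0\<^sub>v n" "E *\<^sub>v z = l \<cdot>\<^sub>v z"
proof (cases "\<exists>a. eigenvalue (map_mat complex_of_real E) a \<and> a \<noteq> 0")
  case True
  then obtain a v where a: "a \<noteq> 0" and v: "v \<in> carrier_vec n" "v \<noteq> 0\<^sub>v n"
    and Ev: "map_mat complex_of_real E *\<^sub>v v = a \<cdot>\<^sub>v v"
    using E unfolding eigenvalue_def eigenvector_def by auto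
  define x where "x = vec n (\<lambda>i. Re (v $ i))"
  define y where "y = vec n (\<lambda>i. Im (v $ i))"
  have x: "x \<in> carrier_vec n" and y: "y \<in> carrier_vec n" unfolding x_def y_def by auto
  have xy: "x \<noteq> 0\<^sub>v n \<or> y \<noteq> 0\<^sub>v n"
  proof (rule ccontr)
    assume "\<not> ?thesis"
    then have "x $ i = 0" "y $ i = 0" if "i < n" for i
      using that by auto
    then have "v = 0\<^sub>v n"
      using v(1) by (intro eq_vecI) (auto simp: x_def y_def complex_eq_iff)
    with v(2) show False ..
  qed
  note Exy = eigenvector_real_imag_parts[OF E v(1) Ev, folded x_def y_def]
  have "Im a = 0" by (rule selfadjoint_rotation_imp_real[OF M E sa x y xy Exy])
  then have "Re a \<noteq> 0" "E *\<^sub>v x = Re a \<cdot>\<^sub>v x" "E *\<^sub>v y = Re a \<cdot>\<^sub>v y"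
    using a Exy x y by (auto simp: complex_eq_iff)
  then show ?thesis using that x y xy by blast
next
  case False
  then have "map_mat complex_of_real E ^\<^sub>m n = 0\<^sub>m n n"
    using E by (intro pow_eq_zero_if_eigenvalues_zero) auto
  also have "\<dots> = map_mat complex_of_real (0\<^sub>m n n)"
    by (intro eq_matI) auto
  finally have "E ^\<^sub>m n = 0\<^sub>m n n"
    using E by (simp add: of_real_hom.mat_hom_pow[symmetric] of_real_hom.mat_hom_inj)
  then have "E *\<^sub>v z0 = 0\<^sub>v n"
    using z0 E by (intro selfadjoint_nilpotent_imp_zero[OF M E sa, of _ n]) auto
  with z0(2) show ?thesis ..
qed

section \<open>The standard symplectic form\<close>

lemma Jmat_carrier [simp]: "Jmat n \<in> carrier_mat (2 * n) (2 * n)"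
  unfolding Jmat_def by (metis four_block_carrier_mat mult_2 zero_carrier_mat)

lemma Jmat_dim [simp]: "dim_row (Jmat n) = 2 * n" "dim_col (Jmat n) = 2 * n"
  using Jmat_carrier by blast+

lemma Jmat_index:
  "i < 2 * n \<Longrightarrow> j < 2 * n \<Longrightarrow>
    Jmat n $$ (i, j) = (if i < n then (if j = i + n then 1 else 0) else (if i = j + n then -1 else 0))"
  unfolding Jmat_def by (subst index_mat_four_block) auto

lemma Jmat_mult_vec_index:
  assumes w: "w \<in> carrier_vec (2 * n)" and i: "i < 2 * n"
  shows "(Jmat n *\<^sub>v w) $ i = (if i < n then w $ (i + n) else - w $ (i - n))"
proof -
  have "(Jmat n *\<^sub>v w) $ i = (\<Sum>j = 0..<2 * n. Jmat n $$ (i, j) * w $ j)"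
    using w i by (simp add: scalar_prod_def)
  also have "\<dots> = (\<Sum>j = 0..<2 * n. if j = (if i < n then i + n else i - n)
                     then (if i < n then w $ j else - w $ j) else 0)"
    using i by (intro sum.cong) (auto simp: Jmat_index)
  also have "\<dots> = (if i < n then w $ (i + n) else - w $ (i - n))"
    using i by (auto simp: sum.delta')
  finally show ?thesis .
qed

lemma Jmat_mult_vec_carrier [simp]: "w \<in> carrier_vec (2 * n) \<Longrightarrow> Jmat n *\<^sub>v w \<in> carrier_vec (2 * n)"
  by (rule mult_mat_vec_carrier[OF Jmat_carrier])

lemma transpose_Jmat: "transpose_mat (Jmat n) = - Jmat n"
  by (rule eq_matI) (auto simp: Jmat_index)

lemma Jmat_mult_Jmat_vec:
  assumes "w \<in> carrier_vec (2 * n)"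
  shows "Jmat n *\<^sub>v (Jmat n *\<^sub>v w) = - w"
proof (rule eq_vecI)
  fix i assume "i < dim_vec (- w)"
  then have i: "i < 2 * n" "i - n < n" using assms by auto
  then show "(Jmat n *\<^sub>v (Jmat n *\<^sub>v w)) $ i = (- w) $ i"
    unfolding Jmat_mult_vec_index[OF Jmat_mult_vec_carrier[OF assms] i(1)]
    using assms by (simp add: Jmat_mult_vec_index del: index_mult_mat_vec)
qed (use assms in simp)

lemma Jmat_mult_vec_eq_zero_iff:
  assumes "w \<in> carrier_vec (2 * n)"
  shows "Jmat n *\<^sub>v w = 0\<^sub>v (2 * n) \<longleftrightarrow> w = 0\<^sub>v (2 * n)"
  using Jmat_mult_Jmat_vec[OF assms] assms by (metis Jmat_carrier mult_mat_zero_vec uminus_zero_vec uminus_uminus_vec)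

lemma Jmat_scalar_prod_antisym:
  assumes a: "a \<in> carrier_vec (2 * n)" and b: "b \<in> carrier_vec (2 * n)"
  shows "a \<bullet> (Jmat n *\<^sub>v b) = - (b \<bullet> (Jmat n *\<^sub>v a))"
proof -
  have "a \<bullet> (Jmat n *\<^sub>v b) = (transpose_mat (Jmat n) *\<^sub>v a) \<bullet> b"
    using transpose_vec_mult_scalar[OF Jmat_carrier b a] by simp
  also have "\<dots> = - (b \<bullet> (Jmat n *\<^sub>v a))"
    unfolding transpose_Jmat using a b comm_scalar_prod[OF Jmat_mult_vec_carrier[OF a] b]
    by (simp add: scalar_prod_uminus_left)
  finally show ?thesis .
qed

lemma Jmat_scalar_prod_self: "a \<in> carrier_vec (2 * n) \<Longrightarrow> a \<bullet> (Jmat n *\<^sub>v a) = 0"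
  using Jmat_scalar_prod_antisym[of a n a] by simp

lemma Jmat_scalar_prod_Jmat:
  assumes a: "a \<in> carrier_vec (2 * n)" and b: "b \<in> carrier_vec (2 * n)"
  shows "(Jmat n *\<^sub>v a) \<bullet> (Jmat n *\<^sub>v b) = a \<bullet> b"
  using Jmat_scalar_prod_antisym[of "Jmat n *\<^sub>v a" n b] a b comm_scalar_prod[OF b a]
  by (simp add: Jmat_mult_Jmat_vec)

lemma JM_mult_vec:
  assumes "M \<in> carrier_mat (2 * n) (2 * n)" "x \<in> carrier_vec (2 * n)"
  shows "(Jmat n * M) *\<^sub>v x = Jmat n *\<^sub>v (M *\<^sub>v x)"
  using assms by (simp add: assoc_mult_mat_vec[of _ "2 * n" "2 * n" _ "2 * n"])

lemma JM_square_mult_vec: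
  assumes "M \<in> carrier_mat (2 * n) (2 * n)" "x \<in> carrier_vec (2 * n)"
  shows "((Jmat n * M) * (Jmat n * M)) *\<^sub>v x = Jmat n *\<^sub>v (M *\<^sub>v (Jmat n *\<^sub>v (M *\<^sub>v x)))"
proof -
  note T = mult_carrier_mat[OF Jmat_carrier assms(1)]
  show ?thesis
    using assoc_mult_mat_vec[OF T T assms(2)] JM_mult_vec[OF assms(1)] assms
    by simp
qed

lemma selfadjoint_JM_square:
  assumes M: "sym_pos_def (2 * n) M"
  shows "selfadjoint_wrt (2 * n) M ((Jmat n * M) * (Jmat n * M))"
proof -
  note Mc = sym_pos_defD(1)[OF M]
  have "x \<bullet> (M *\<^sub>v (((Jmat n * M) * (Jmat n * M)) *\<^sub>v y)) =
      - ((Jmat n *\<^sub>v (M *\<^sub>v x)) \<bullet> (M *\<^sub>v (Jmat n *\<^sub>v (M *\<^sub>v y))))"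
    if x: "x \<in> carrier_vec (2 * n)" and y: "y \<in> carrier_vec (2 * n)" for x y
  proof -
    let ?w = "M *\<^sub>v (Jmat n *\<^sub>v (M *\<^sub>v y))"
    have w: "?w \<in> carrier_vec (2 * n)" using Mc y by simp
    have "x \<bullet> (M *\<^sub>v (Jmat n *\<^sub>v ?w)) = (Jmat n *\<^sub>v ?w) \<bullet> (M *\<^sub>v x)"
      using sym_pos_def_scalar_prod_comm[OF M x, of "Jmat n *\<^sub>v ?w"] w Mc x
      by (simp add: comm_scalar_prod[of _ "2 * n" "M *\<^sub>v x"])
    also have "\<dots> = (M *\<^sub>v x) \<bullet> (Jmat n *\<^sub>v ?w)"
      using w Mc x by (simp add: comm_scalar_prod[of _ "2 * n" "M *\<^sub>v x"])
    also have "\<dots> = - (?w \<bullet> (Jmat n *\<^sub>v (M *\<^sub>v x)))"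
      using Jmat_scalar_prod_antisym[of "M *\<^sub>v x" n ?w] w Mc x by simp
    also have "\<dots> = - ((Jmat n *\<^sub>v (M *\<^sub>v x)) \<bullet> ?w)"
      using w Mc x by (simp add: comm_scalar_prod[of ?w "2 * n"])
    finally show ?thesis
      using JM_square_mult_vec[OF Mc y] by simp
  qed
  moreover have "(Jmat n *\<^sub>v (M *\<^sub>v x)) \<bullet> (M *\<^sub>v (Jmat n *\<^sub>v (M *\<^sub>v y))) =
      (Jmat n *\<^sub>v (M *\<^sub>v y)) \<bullet> (M *\<^sub>v (Jmat n *\<^sub>v (M *\<^sub>v x)))"
    if "x \<in> carrier_vec (2 * n)" "y \<in> carrier_vec (2 * n)" for x y
    using sym_pos_def_scalar_prod_comm[OF M] that Mc by simp
  ultimately show ?thesis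
    unfolding selfadjoint_wrt_def by metis
qed

lemma JM_mult_vec_eq_zero_iff:
  assumes M: "sym_pos_def (2 * n) M" and x: "x \<in> carrier_vec (2 * n)"
  shows "Jmat n *\<^sub>v (M *\<^sub>v x) = 0\<^sub>v (2 * n) \<longleftrightarrow> x = 0\<^sub>v (2 * n)"
proof -
  have "M *\<^sub>v x = 0\<^sub>v (2 * n) \<longleftrightarrow> x = 0\<^sub>v (2 * n)"
    using sym_pos_defD[OF M] x by force
  then show ?thesis
    using Jmat_mult_vec_eq_zero_iff[OF mult_mat_vec_carrier[OF sym_pos_defD(1)[OF M] x]] by simp
qed

lemma M_JM_of_JM_square_eigenvector:
  assumes Mc: "M \<in> carrier_mat (2 * n) (2 * n)" and z: "z \<in> carrier_vec (2 * n)"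
    and eig: "Jmat n *\<^sub>v (M *\<^sub>v (Jmat n *\<^sub>v (M *\<^sub>v z))) = l \<cdot>\<^sub>v z"
  shows "M *\<^sub>v (Jmat n *\<^sub>v (M *\<^sub>v z)) = (- l) \<cdot>\<^sub>v (Jmat n *\<^sub>v z)"
proof -
  let ?w = "Jmat n *\<^sub>v (M *\<^sub>v z)"
  have w: "?w \<in> carrier_vec (2 * n)" using Mc z by simp
  have "- (M *\<^sub>v ?w) = Jmat n *\<^sub>v (Jmat n *\<^sub>v (M *\<^sub>v ?w))"
    using Jmat_mult_Jmat_vec[OF mult_mat_vec_carrier[OF Mc w]] by simp
  also have "\<dots> = l \<cdot>\<^sub>v (Jmat n *\<^sub>v z)"
    using eig z by (simp add: mult_mat_vec[OF Jmat_carrier])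
  finally have "M *\<^sub>v ?w = - (l \<cdot>\<^sub>v (Jmat n *\<^sub>v z))"
    by (metis uminus_uminus_vec)
  also have "\<dots> = (- l) \<cdot>\<^sub>v (Jmat n *\<^sub>v z)"
    by (intro eq_vecI) auto
  finally show ?thesis .
qed

lemma JM_square_eigenvalue_neg:
  assumes M: "sym_pos_def (2 * n) M" and z: "z \<in> carrier_vec (2 * n)" and z_ne: "z \<noteq> 0\<^sub>v (2 * n)"
    and eig: "Jmat n *\<^sub>v (M *\<^sub>v (Jmat n *\<^sub>v (M *\<^sub>v z))) = l \<cdot>\<^sub>v z"
  shows "l < 0"
proof -
  note Mc = sym_pos_defD(1)[OF M]
  let ?w = "Jmat n *\<^sub>v (M *\<^sub>v z)"
  have Mz: "M *\<^sub>v z \<in> carrier_vec (2 * n)" and w: "?w \<in> carrier_vec (2 * n)"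
    using Mc z by simp_all
  have w_ne: "?w \<noteq> 0\<^sub>v (2 * n)" using JM_mult_vec_eq_zero_iff[OF M z] z_ne by simp
  have "?w \<bullet> (M *\<^sub>v ?w) = - l * (?w \<bullet> (Jmat n *\<^sub>v z))"
    unfolding M_JM_of_JM_square_eigenvector[OF Mc z eig] using w z by simp
  also have "?w \<bullet> (Jmat n *\<^sub>v z) = z \<bullet> (M *\<^sub>v z)"
    using Jmat_scalar_prod_Jmat[OF Mz z] comm_scalar_prod[OF Mz z] by simp
  finally have "0 < - l * (z \<bullet> (M *\<^sub>v z))"
    using sym_pos_defD(3)[OF M w w_ne] by simp
  then show ?thesis
    using sym_pos_defD(3)[OF M z z_ne] by (simp add: mult_less_0_iff)
qed

lemma symp_eigenpair_of_JM_square_eigenvector: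
  assumes M: "sym_pos_def (2 * n) M" and z: "z \<in> carrier_vec (2 * n)" and z_ne: "z \<noteq> 0\<^sub>v (2 * n)"
    and eig: "Jmat n *\<^sub>v (M *\<^sub>v (Jmat n *\<^sub>v (M *\<^sub>v z))) = l \<cdot>\<^sub>v z"
  obtains \<alpha> \<beta> e where "0 < e"
    "M *\<^sub>v (\<alpha> \<cdot>\<^sub>v z) = e \<cdot>\<^sub>v (Jmat n *\<^sub>v (\<beta> \<cdot>\<^sub>v (Jmat n *\<^sub>v (M *\<^sub>v z))))"
    "M *\<^sub>v (\<beta> \<cdot>\<^sub>v (Jmat n *\<^sub>v (M *\<^sub>v z))) = (- e) \<cdot>\<^sub>v (Jmat n *\<^sub>v (\<alpha> \<cdot>\<^sub>v z))"
    "(\<alpha> \<cdot>\<^sub>v z) \<bullet> (Jmat n *\<^sub>v (\<beta> \<cdot>\<^sub>v (Jmat n *\<^sub>v (M *\<^sub>v z)))) = 1"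
proof -
  note Mc = sym_pos_defD(1)[OF M]
  define q where "q = z \<bullet> (M *\<^sub>v z)"
  define e where "e = sqrt (- l)"
  define \<alpha> where "\<alpha> = sqrt (e / q)"
  define w where "w = Jmat n *\<^sub>v (M *\<^sub>v z)"
  define u where "u = \<alpha> \<cdot>\<^sub>v z"
  define v where "v = (- \<alpha> / e) \<cdot>\<^sub>v w"
  have Mz: "M *\<^sub>v z \<in> carrier_vec (2 * n)" and w: "w \<in> carrier_vec (2 * n)"
    using Mc z by (simp_all add: w_def)
  have q: "0 < q" unfolding q_def using sym_pos_defD(3)[OF M z z_ne] .
  have l: "l < 0" by (rule JM_square_eigenvalue_neg[OF M z z_ne eig])
  then have e: "0 < e" unfolding e_def by simp
  have l_ee: "l = - (e * e)" unfolding e_def using l by simp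
  have \<alpha>\<alpha>: "\<alpha> * \<alpha> = e / q" unfolding \<alpha>_def using e q by simp
  have Mw: "M *\<^sub>v w = (- l) \<cdot>\<^sub>v (Jmat n *\<^sub>v z)"
    unfolding w_def by (rule M_JM_of_JM_square_eigenvector[OF Mc z eig])
  have Jw: "Jmat n *\<^sub>v w = - (M *\<^sub>v z)"
    unfolding w_def by (rule Jmat_mult_Jmat_vec[OF Mz])
  have "M *\<^sub>v u = e \<cdot>\<^sub>v (Jmat n *\<^sub>v v)"
    unfolding u_def v_def using e z w Mz Jw
    by (intro eq_vecI) (auto simp: mult_mat_vec[OF Mc] mult_mat_vec[OF Jmat_carrier])
  moreover have "M *\<^sub>v v = (- e) \<cdot>\<^sub>v (Jmat n *\<^sub>v u)"
    unfolding u_def v_def using e z w Mw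
    by (intro eq_vecI) (auto simp: mult_mat_vec[OF Mc] mult_mat_vec[OF Jmat_carrier] l_ee)
  moreover have "u \<bullet> (Jmat n *\<^sub>v v) = \<alpha> * \<alpha> / e * q"
    unfolding u_def v_def using z w Mz Jw carrier_vecD[OF Mz]
    by (simp add: mult_mat_vec[OF Jmat_carrier] q_def)
  then have "u \<bullet> (Jmat n *\<^sub>v v) = 1"
    using \<alpha>\<alpha> e q by simp
  ultimately show ?thesis
    using that e unfolding u_def v_def w_def by blast
qed

section \<open>Extending symplectic eigenvector pairs\<close>

(* The pairs (U i, V i), i < m, play the role of the column pairs (s_i, s_(n+i)) of a
   symplectic S with S^T M S = diag(D, D), D = diag(d_0, ..., d_(n-1)). *)
locale symp_eigen_family =
  fixes n :: nat and M :: "real mat" and m :: nat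
    and U V :: "nat \<Rightarrow> real vec" and d :: "nat \<Rightarrow> real"
  assumes spd: "sym_pos_def (2 * n) M"
    and U_carrier: "\<And>i. i < m \<Longrightarrow> U i \<in> carrier_vec (2 * n)"
    and V_carrier: "\<And>i. i < m \<Longrightarrow> V i \<in> carrier_vec (2 * n)"
    and M_U: "\<And>i. i < m \<Longrightarrow> M *\<^sub>v U i = d i \<cdot>\<^sub>v (Jmat n *\<^sub>v V i)"
    and M_V: "\<And>i. i < m \<Longrightarrow> M *\<^sub>v V i = (- d i) \<cdot>\<^sub>v (Jmat n *\<^sub>v U i)"
    and U_J_U: "\<And>i j. i < m \<Longrightarrow> j < m \<Longrightarrow> U i \<bullet> (Jmat n *\<^sub>v U j) = 0"
    and V_J_V: "\<And>i j. i < m \<Longrightarrow> j < m \<Longrightarrow> V i \<bullet> (Jmat n *\<^sub>v V j) = 0"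
    and U_J_V: "\<And>i j. i < m \<Longrightarrow> j < m \<Longrightarrow> U i \<bullet> (Jmat n *\<^sub>v V j) = (if i = j then 1 else 0)"
begin

lemma M_carrier: "M \<in> carrier_mat (2 * n) (2 * n)"
  using sym_pos_defD(1)[OF spd] .

lemma V_J_U: "i < m \<Longrightarrow> j < m \<Longrightarrow> V i \<bullet> (Jmat n *\<^sub>v U j) = (if i = j then -1 else 0)"
  using Jmat_scalar_prod_antisym[OF V_carrier U_carrier] U_J_V by simp

lemma M_U_scalar_prod:
  "i < m \<Longrightarrow> x \<in> carrier_vec (2 * n) \<Longrightarrow> (M *\<^sub>v U i) \<bullet> x = d i * (x \<bullet> (Jmat n *\<^sub>v V i))"
  using M_U comm_scalar_prod[of x "2 * n" "Jmat n *\<^sub>v V i"] V_carrier by simp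

lemma M_V_scalar_prod:
  "i < m \<Longrightarrow> x \<in> carrier_vec (2 * n) \<Longrightarrow> (M *\<^sub>v V i) \<bullet> x = - d i * (x \<bullet> (Jmat n *\<^sub>v U i))"
  using M_V comm_scalar_prod[of x "2 * n" "Jmat n *\<^sub>v U i"] U_carrier by simp

lemma d_pos: "i < m \<Longrightarrow> 0 < d i"
proof -
  assume i: "i < m"
  have "U i \<bullet> (M *\<^sub>v U i) = d i"
    using M_U[OF i] U_J_V[OF i i] U_carrier[OF i] V_carrier[OF i] by simp
  moreover have "U i \<noteq> 0\<^sub>v (2 * n)"
    using U_J_V[OF i i] V_carrier[OF i] by auto
  ultimately show ?thesis
    using sym_pos_defD(3)[OF spd U_carrier[OF i]] by simp
qed

lemma JM_U:
  assumes i: "i < m"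
  shows "Jmat n *\<^sub>v (M *\<^sub>v U i) = (- d i) \<cdot>\<^sub>v V i"
proof -
  have "Jmat n *\<^sub>v (M *\<^sub>v U i) = d i \<cdot>\<^sub>v (- V i)"
    using M_U[OF i] V_carrier[OF i] by (simp add: mult_mat_vec[OF Jmat_carrier] Jmat_mult_Jmat_vec)
  then show ?thesis
    using V_carrier[OF i] by (intro eq_vecI) auto
qed

lemma JM_V:
  assumes i: "i < m"
  shows "Jmat n *\<^sub>v (M *\<^sub>v V i) = d i \<cdot>\<^sub>v U i"
proof -
  have "Jmat n *\<^sub>v (M *\<^sub>v V i) = (- d i) \<cdot>\<^sub>v (- U i)"
    using M_V[OF i] U_carrier[OF i] by (simp add: mult_mat_vec[OF Jmat_carrier] Jmat_mult_Jmat_vec)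
  then show ?thesis
    using U_carrier[OF i] by (intro eq_vecI) auto
qed

definition in_symp_complement :: "real vec \<Rightarrow> bool" where
  "in_symp_complement x \<longleftrightarrow> x \<in> carrier_vec (2 * n) \<and>
     (\<forall>i<m. x \<bullet> (Jmat n *\<^sub>v U i) = 0 \<and> x \<bullet> (Jmat n *\<^sub>v V i) = 0)"

lemma in_symp_complement_smult:
  "in_symp_complement x \<Longrightarrow> in_symp_complement (c \<cdot>\<^sub>v x)"
  unfolding in_symp_complement_def using U_carrier V_carrier by simp

lemma in_symp_complement_JM:
  assumes x: "in_symp_complement x"
  shows "in_symp_complement (Jmat n *\<^sub>v (M *\<^sub>v x))"
proof -
  have xc: "x \<in> carrier_vec (2 * n)" using x unfolding in_symp_complement_def by blast
  have "(Jmat n *\<^sub>v (M *\<^sub>v x)) \<bullet> (Jmat n *\<^sub>v w) = (M *\<^sub>v w) \<bullet> x" if "w \<in> carrier_vec (2 * n)" for w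
    using Jmat_scalar_prod_Jmat[OF mult_mat_vec_carrier[OF M_carrier xc] that]
      sym_pos_def_scalar_prod_comm[OF spd that xc] comm_scalar_prod[OF mult_mat_vec_carrier[OF M_carrier xc] that]
      comm_scalar_prod[OF mult_mat_vec_carrier[OF M_carrier that] xc]
    by simp
  then show ?thesis
    using x M_U_scalar_prod M_V_scalar_prod U_carrier V_carrier M_carrier
    unfolding in_symp_complement_def by simp
qed

lemma exists_nonzero_in_symp_complement:
  assumes "m < n"
  obtains w where "in_symp_complement w" "w \<noteq> 0\<^sub>v (2 * n)"
proof -
  define f where "f i = (if i < m then Jmat n *\<^sub>v U i else Jmat n *\<^sub>v V (i - m))" for i
  have "f i \<in> carrier_vec (2 * n)" if "i < 2 * m" for i
    using that U_carrier V_carrier by (simp add: f_def)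
  then obtain w where w: "w \<in> carrier_vec (2 * n)" "w \<noteq> 0\<^sub>v (2 * n)" and orth: "\<And>i. i < 2 * m \<Longrightarrow> f i \<bullet> w = 0"
    using exists_nonzero_orthogonal_vec[of "2 * m" "2 * n" f] assms by auto
  have "w \<bullet> (Jmat n *\<^sub>v U i) = 0 \<and> w \<bullet> (Jmat n *\<^sub>v V i) = 0" if i: "i < m" for i
    using orth[of i] orth[of "m + i"] i w U_carrier[OF i] V_carrier[OF i]
    by (simp add: f_def comm_scalar_prod[of w "2 * n"])
  then show ?thesis
    using that w unfolding in_symp_complement_def by blast
qed

(* (J M)^2 maps U i and V i to -(d i)^2 times themselves; the two correction terms cancel this
   and vanish on the symplectic complement of the pairs. *)
definition deflated :: "real mat" where
  "deflated = (Jmat n * M) * (Jmat n * M)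
     + outer_sum (2 * n) {..<m} (\<lambda>i. d i \<cdot>\<^sub>v U i) (\<lambda>i. M *\<^sub>v U i)
     + outer_sum (2 * n) {..<m} (\<lambda>i. d i \<cdot>\<^sub>v V i) (\<lambda>i. M *\<^sub>v V i)"

lemma JM_square_carrier: "(Jmat n * M) * (Jmat n * M) \<in> carrier_mat (2 * n) (2 * n)"
  using mult_carrier_mat[OF Jmat_carrier M_carrier] by (meson mult_carrier_mat)

lemma deflated_carrier: "deflated \<in> carrier_mat (2 * n) (2 * n)"
  unfolding deflated_def using JM_square_carrier by simp

lemma deflated_selfadjoint: "selfadjoint_wrt (2 * n) M deflated"
  unfolding deflated_def
  using selfadjoint_JM_square[OF spd] JM_square_carrier M_carrier sym_pos_defD(2)[OF spd] U_carrier V_carrier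
  by (intro selfadjoint_wrt_add selfadjoint_outer_sum add_carrier_mat) auto

lemma outer_sum_U_mult_vec:
  assumes "x \<in> carrier_vec (2 * n)"
  shows "outer_sum (2 * n) {..<m} (\<lambda>i. d i \<cdot>\<^sub>v U i) (\<lambda>i. M *\<^sub>v U i) *\<^sub>v x =
    vec (2 * n) (\<lambda>a. \<Sum>i<m. d i * d i * (x \<bullet> (Jmat n *\<^sub>v V i)) * U i $ a)"
proof -
  have "(d i \<cdot>\<^sub>v U i) $ a = d i * U i $ a" if "i < m" "a < 2 * n" for i a
    using U_carrier[OF that(1)] that(2) by simp
  then show ?thesis
    unfolding outer_sum_mult_vec[OF assms] using assms
    by (intro eq_vecI) (auto simp: M_U_scalar_prod intro!: sum.cong)
qed

lemma outer_sum_V_mult_vec: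
  assumes "x \<in> carrier_vec (2 * n)"
  shows "outer_sum (2 * n) {..<m} (\<lambda>i. d i \<cdot>\<^sub>v V i) (\<lambda>i. M *\<^sub>v V i) *\<^sub>v x =
    vec (2 * n) (\<lambda>a. - (\<Sum>i<m. d i * d i * (x \<bullet> (Jmat n *\<^sub>v U i)) * V i $ a))"
proof -
  have "(d i \<cdot>\<^sub>v V i) $ a = d i * V i $ a" if "i < m" "a < 2 * n" for i a
    using V_carrier[OF that(1)] that(2) by simp
  then show ?thesis
    unfolding outer_sum_mult_vec[OF assms] using assms
    by (intro eq_vecI) (auto simp: M_V_scalar_prod sum_negf[symmetric] intro!: sum.cong)
qed

lemma deflated_mult_vec_index:
  assumes x: "x \<in> carrier_vec (2 * n)" and a: "a < 2 * n"
  shows "(deflated *\<^sub>v x) $ a = (Jmat n *\<^sub>v (M *\<^sub>v (Jmat n *\<^sub>v (M *\<^sub>v x)))) $ a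
    + (\<Sum>i<m. d i * d i * (x \<bullet> (Jmat n *\<^sub>v V i)) * U i $ a)
    - (\<Sum>i<m. d i * d i * (x \<bullet> (Jmat n *\<^sub>v U i)) * V i $ a)"
  unfolding deflated_def using x a JM_square_carrier M_carrier
  by (simp add: add_mult_distrib_mat_vec[of _ "2 * n" "2 * n"] JM_square_mult_vec[OF M_carrier]
      outer_sum_U_mult_vec outer_sum_V_mult_vec)

lemma deflated_on_symp_complement:
  assumes "in_symp_complement x"
  shows "deflated *\<^sub>v x = Jmat n *\<^sub>v (M *\<^sub>v (Jmat n *\<^sub>v (M *\<^sub>v x)))"
proof (rule eq_vecI)
  have x: "x \<in> carrier_vec (2 * n)" and orth: "\<And>i. i < m \<Longrightarrow> x \<bullet> (Jmat n *\<^sub>v U i) = 0 \<and> x \<bullet> (Jmat n *\<^sub>v V i) = 0"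
    using assms unfolding in_symp_complement_def by auto
  fix a assume "a < dim_vec (Jmat n *\<^sub>v (M *\<^sub>v (Jmat n *\<^sub>v (M *\<^sub>v x))))"
  then have a: "a < 2 * n" by simp
  have "(\<Sum>i<m. d i * d i * (x \<bullet> (Jmat n *\<^sub>v V i)) * U i $ a) = 0"
    "(\<Sum>i<m. d i * d i * (x \<bullet> (Jmat n *\<^sub>v U i)) * V i $ a) = 0"
    using orth by (auto intro: sum.neutral)
  then show "(deflated *\<^sub>v x) $ a = (Jmat n *\<^sub>v (M *\<^sub>v (Jmat n *\<^sub>v (M *\<^sub>v x)))) $ a"
    using deflated_mult_vec_index[OF x a] by simp
qed (use deflated_carrier in simp)

lemma JM_square_U: "j < m \<Longrightarrow> Jmat n *\<^sub>v (M *\<^sub>v (Jmat n *\<^sub>v (M *\<^sub>v U j))) = (- d j * d j) \<cdot>\<^sub>v U j"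
  using U_carrier[of j] V_carrier[of j] mult_mat_vec_carrier[OF M_carrier V_carrier[of j]]
  by (simp add: JM_U JM_V mult_mat_vec[OF M_carrier] mult_mat_vec[OF Jmat_carrier] smult_smult_assoc)

lemma JM_square_V: "j < m \<Longrightarrow> Jmat n *\<^sub>v (M *\<^sub>v (Jmat n *\<^sub>v (M *\<^sub>v V j))) = (- d j * d j) \<cdot>\<^sub>v V j"
  using U_carrier[of j] V_carrier[of j] mult_mat_vec_carrier[OF M_carrier U_carrier[of j]]
  by (simp add: JM_U JM_V mult_mat_vec[OF M_carrier] mult_mat_vec[OF Jmat_carrier] smult_smult_assoc)

lemma deflated_U:
  assumes j: "j < m"
  shows "deflated *\<^sub>v U j = 0\<^sub>v (2 * n)"
proof (rule eq_vecI)
  fix a assume "a < dim_vec (0\<^sub>v (2 * n) :: real vec)"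
  then have a: "a < 2 * n" by simp
  have "(\<Sum>i<m. d i * d i * (U j \<bullet> (Jmat n *\<^sub>v V i)) * U i $ a) =
      (\<Sum>i<m. if i = j then d j * d j * U j $ a else 0)"
    using j U_J_V[OF j] by (intro sum.cong) auto
  moreover have "(\<Sum>i<m. d i * d i * (U j \<bullet> (Jmat n *\<^sub>v U i)) * V i $ a) = 0"
    using j U_J_U[OF j] by simp
  ultimately show "(deflated *\<^sub>v U j) $ a = 0\<^sub>v (2 * n) $ a"
    using j a U_carrier[OF j] by (simp add: deflated_mult_vec_index JM_square_U)
qed (simp add: deflated_carrier[THEN carrier_matD(1)])

lemma deflated_V:
  assumes j: "j < m"
  shows "deflated *\<^sub>v V j = 0\<^sub>v (2 * n)"
proof (rule eq_vecI)
  fix a assume "a < dim_vec (0\<^sub>v (2 * n) :: real vec)"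
  then have a: "a < 2 * n" by simp
  have "(\<Sum>i<m. d i * d i * (V j \<bullet> (Jmat n *\<^sub>v U i)) * V i $ a) =
      (\<Sum>i<m. if i = j then - d j * d j * V j $ a else 0)"
    using j V_J_U[OF j] by (intro sum.cong) auto
  moreover have "(\<Sum>i<m. d i * d i * (V j \<bullet> (Jmat n *\<^sub>v V i)) * U i $ a) = 0"
    using j V_J_V[OF j] by simp
  ultimately show "(deflated *\<^sub>v V j) $ a = 0\<^sub>v (2 * n) $ a"
    using j a V_carrier[OF j] by (simp add: deflated_mult_vec_index JM_square_V)
qed (simp add: deflated_carrier[THEN carrier_matD(1)])

lemma deflated_eigenvector_in_symp_complement:
  assumes z: "z \<in> carrier_vec (2 * n)" and Dz: "deflated *\<^sub>v z = l \<cdot>\<^sub>v z" and l: "l \<noteq> 0"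
  shows "in_symp_complement z"
proof -
  have key: "w \<bullet> (M *\<^sub>v z) = 0" if w: "w \<in> carrier_vec (2 * n)" and Dw: "deflated *\<^sub>v w = 0\<^sub>v (2 * n)" for w
  proof -
    have "l * (w \<bullet> (M *\<^sub>v z)) = w \<bullet> (M *\<^sub>v (deflated *\<^sub>v z))"
      unfolding Dz using w z M_carrier by (simp add: mult_mat_vec[OF M_carrier])
    also have "\<dots> = z \<bullet> (M *\<^sub>v (deflated *\<^sub>v w))"
      by (rule selfadjoint_wrtD[OF deflated_selfadjoint w z])
    also have "\<dots> = 0"
      unfolding Dw using z M_carrier by simp
    finally show ?thesis using l by simp
  qed
  have "z \<bullet> (Jmat n *\<^sub>v U i) = 0 \<and> z \<bullet> (Jmat n *\<^sub>v V i) = 0" if i: "i < m" for i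
  proof -
    have "(M *\<^sub>v V i) \<bullet> z = 0" "(M *\<^sub>v U i) \<bullet> z = 0"
      using key[OF V_carrier[OF i] deflated_V[OF i]] key[OF U_carrier[OF i] deflated_U[OF i]]
        sym_pos_def_scalar_prod_comm[OF spd _ z] comm_scalar_prod[OF mult_mat_vec_carrier[OF M_carrier] z]
        U_carrier[OF i] V_carrier[OF i]
      by (metis mult_mat_vec_carrier[OF M_carrier] comm_scalar_prod)+
    then show ?thesis
      using M_U_scalar_prod[OF i z] M_V_scalar_prod[OF i z] d_pos[OF i] by simp
  qed
  then show ?thesis
    using z unfolding in_symp_complement_def by blast
qed

lemma extend_by_pair:
  assumes u: "in_symp_complement u" and v: "in_symp_complement v"
    and Mu: "M *\<^sub>v u = e \<cdot>\<^sub>v (Jmat n *\<^sub>v v)" and Mv: "M *\<^sub>v v = (- e) \<cdot>\<^sub>v (Jmat n *\<^sub>v u)"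
    and uv: "u \<bullet> (Jmat n *\<^sub>v v) = 1"
  shows "symp_eigen_family n M (Suc m) (U(m := u)) (V(m := v)) (d(m := e))"
proof -
  have uc: "u \<in> carrier_vec (2 * n)" and vc: "v \<in> carrier_vec (2 * n)"
    and u_orth: "\<And>i. i < m \<Longrightarrow> u \<bullet> (Jmat n *\<^sub>v U i) = 0 \<and> u \<bullet> (Jmat n *\<^sub>v V i) = 0"
    and v_orth: "\<And>i. i < m \<Longrightarrow> v \<bullet> (Jmat n *\<^sub>v U i) = 0 \<and> v \<bullet> (Jmat n *\<^sub>v V i) = 0"
    using u v unfolding in_symp_complement_def by auto
  have orth_u: "U i \<bullet> (Jmat n *\<^sub>v u) = 0" "V i \<bullet> (Jmat n *\<^sub>v u) = 0"
    and orth_v: "U i \<bullet> (Jmat n *\<^sub>v v) = 0" "V i \<bullet> (Jmat n *\<^sub>v v) = 0" if i: "i < m" for i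
    using Jmat_scalar_prod_antisym[OF U_carrier[OF i] uc] Jmat_scalar_prod_antisym[OF V_carrier[OF i] uc]
      Jmat_scalar_prod_antisym[OF U_carrier[OF i] vc] Jmat_scalar_prod_antisym[OF V_carrier[OF i] vc]
      u_orth[OF i] v_orth[OF i] by simp_all
  show ?thesis
  proof (unfold_locales, goal_cases)
    case 1 show ?case by (rule spd)
  qed (auto simp: less_Suc_eq U_carrier V_carrier uc vc M_U M_V Mu Mv U_J_U V_J_V U_J_V uv
      u_orth v_orth orth_u orth_v Jmat_scalar_prod_self)
qed

lemma exists_extension:
  assumes "m < n"
  obtains u v e where "symp_eigen_family n M (Suc m) (U(m := u)) (V(m := v)) (d(m := e))"
proof -
  obtain w where w: "in_symp_complement w" "w \<noteq> 0\<^sub>v (2 * n)"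
    using exists_nonzero_in_symp_complement[OF assms] .
  have wc: "w \<in> carrier_vec (2 * n)" using w(1) unfolding in_symp_complement_def by blast
  have "deflated *\<^sub>v w \<noteq> 0\<^sub>v (2 * n)"
    unfolding deflated_on_symp_complement[OF w(1)]
    using JM_mult_vec_eq_zero_iff[OF spd] wc w(2) mult_mat_vec_carrier[OF M_carrier wc] by simp
  then obtain l z where l: "l \<noteq> 0" and z: "z \<in> carrier_vec (2 * n)" "z \<noteq> 0\<^sub>v (2 * n)"
    and Dz: "deflated *\<^sub>v z = l \<cdot>\<^sub>v z"
    using selfadjoint_nonzero_eigenvector[OF spd deflated_carrier deflated_selfadjoint wc] by blast
  have z_compl: "in_symp_complement z"
    using deflated_eigenvector_in_symp_complement[OF z(1) Dz l] .
  have "Jmat n *\<^sub>v (M *\<^sub>v (Jmat n *\<^sub>v (M *\<^sub>v z))) = l \<cdot>\<^sub>v z"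
    using Dz deflated_on_symp_complement[OF z_compl] by simp
  then obtain \<alpha> \<beta> e where
    "M *\<^sub>v (\<alpha> \<cdot>\<^sub>v z) = e \<cdot>\<^sub>v (Jmat n *\<^sub>v (\<beta> \<cdot>\<^sub>v (Jmat n *\<^sub>v (M *\<^sub>v z))))"
    "M *\<^sub>v (\<beta> \<cdot>\<^sub>v (Jmat n *\<^sub>v (M *\<^sub>v z))) = (- e) \<cdot>\<^sub>v (Jmat n *\<^sub>v (\<alpha> \<cdot>\<^sub>v z))"
    "(\<alpha> \<cdot>\<^sub>v z) \<bullet> (Jmat n *\<^sub>v (\<beta> \<cdot>\<^sub>v (Jmat n *\<^sub>v (M *\<^sub>v z)))) = 1"
    using symp_eigenpair_of_JM_square_eigenvector[OF spd z] by metis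
  moreover have "in_symp_complement (\<alpha> \<cdot>\<^sub>v z)" "in_symp_complement (\<beta> \<cdot>\<^sub>v (Jmat n *\<^sub>v (M *\<^sub>v z)))"
    using z_compl by (simp_all add: in_symp_complement_smult in_symp_complement_JM)
  ultimately show ?thesis
    using extend_by_pair that by blast
qed

lemma williamson_of_complete:
  assumes mn: "m = n"
  shows "williamson n M (mat (2 * n) (2 * n) (\<lambda>(a, b). if b < n then U b $ a else V (b - n) $ a))
    (mat_diag n d)"
proof -
  let ?S = "mat (2 * n) (2 * n) (\<lambda>(a, b). if b < n then U b $ a else V (b - n) $ a)"
  have S: "?S \<in> carrier_mat (2 * n) (2 * n)" by simp
  have col_U: "col ?S b = U b" if "b < n" for b
    using that U_carrier[of b] mn by (intro eq_vecI) auto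
  have col_V: "col ?S b = V (b - n)" if "n \<le> b" "b < 2 * n" for b
  proof -
    have "b - n < n" using that by arith
    then show ?thesis using that V_carrier[of "b - n"] mn by (intro eq_vecI) auto
  qed
  have UV: "U i \<in> carrier_vec (2 * n)" "V i \<in> carrier_vec (2 * n)" if "i < n" for i
    using that U_carrier V_carrier mn by auto
  have "(transpose_mat ?S * Jmat n * ?S) $$ (a, b) = Jmat n $$ (a, b)" if a: "a < 2 * n" and b: "b < 2 * n" for a b
    unfolding index_transpose_mult_mult[OF S Jmat_carrier a b] Jmat_index[OF a b]
    using a b col_U col_V U_J_U V_J_V U_J_V V_J_U mn
    by (cases "a < n"; cases "b < n") auto
  then have sympl: "transpose_mat ?S * Jmat n * ?S = Jmat n"
    by (intro eq_matI) auto
  have "(transpose_mat ?S * M * ?S) $$ (a, b) = diag2 (mat_diag n d) $$ (a, b)"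
    if a: "a < 2 * n" and b: "b < 2 * n" for a b
    unfolding index_transpose_mult_mult[OF S M_carrier a b] diag2_def
    using a b col_U col_V M_U M_V U_J_U V_J_V U_J_V V_J_U mn UV
    by (cases "a < n"; cases "b < n") (auto simp: mat_diag_def)
  then have "transpose_mat ?S * M * ?S = diag2 (mat_diag n d)"
    by (intro eq_matI) (auto simp: diag2_def mat_diag_def)
  then show ?thesis
    unfolding williamson_def symplectic_def
    using S sympl d_pos mn by (auto simp: diagonal_mat_def mat_diag_def)
qed

end

lemma symp_eigen_family_complete:
  "symp_eigen_family n M m U V d \<Longrightarrow> m \<le> n \<Longrightarrow>
    \<exists>U' V' d'. symp_eigen_family n M n U' V' d' \<and> (\<forall>i<m. d' i = d i)"
proof (induction "n - m" arbitrary: m U V d)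
  case 0
  then show ?case by auto
next
  case (Suc k)
  then have mn: "m < n" by simp
  obtain u v e where "symp_eigen_family n M (Suc m) (U(m := u)) (V(m := v)) (d(m := e))"
    using symp_eigen_family.exists_extension[OF Suc.prems(1) mn] .
  moreover have "k = n - Suc m" using Suc.hyps(2) by arith
  ultimately obtain U' V' d' where F: "symp_eigen_family n M n U' V' d'"
    and d': "\<forall>i<Suc m. d' i = (d(m := e)) i"
    using Suc.hyps(1) mn by (metis Suc_leI)
  have "\<forall>i<m. d' i = d i" using d' by auto
  with F show ?case by blast
qed

lemma symp_eigenvalue_of_pair:
  assumes M: "sym_pos_def (2 * n) M" and n: "0 < n"
    and u: "u \<in> carrier_vec (2 * n)" and v: "v \<in> carrier_vec (2 * n)"
    and Mu: "M *\<^sub>v u = e \<cdot>\<^sub>v (Jmat n *\<^sub>v v)" and Mv: "M *\<^sub>v v = (- e) \<cdot>\<^sub>v (Jmat n *\<^sub>v u)"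
    and uv: "u \<bullet> (Jmat n *\<^sub>v v) = 1"
  shows "symp_eigenvalue n M e"
proof -
  interpret empty: symp_eigen_family n M 0 "\<lambda>_. u" "\<lambda>_. v" "\<lambda>_. e"
    using M by unfold_locales auto
  have "symp_eigen_family n M 1 ((\<lambda>_. u)(0 := u)) ((\<lambda>_. v)(0 := v)) ((\<lambda>_. e)(0 := e))"
    using empty.extend_by_pair[of u v e] u v Mu Mv uv unfolding empty.in_symp_complement_def by simp
  from symp_eigen_family_complete[OF this] n
  obtain U' V' d' where F: "symp_eigen_family n M n U' V' d'" and "d' 0 = e"
    by fastforce
  then have "mat_diag n d' $$ (0, 0) = e" using n by (simp add: mat_diag_def)
  then show ?thesis
    unfolding symp_eigenvalue_def using symp_eigen_family.williamson_of_complete[OF F refl] n by metis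
qed

section \<open>Critical points\<close>

lemma less_of_Suc_less:
  fixes \<nu> :: "nat \<Rightarrow> 'a :: order"
  assumes inc: "\<And>i. Suc i < k \<Longrightarrow> \<nu> i < \<nu> (Suc i)" and "i < j" "j < k"
  shows "\<nu> i < \<nu> j"
  using assms(2,3)
proof (induction j)
  case (Suc j)
  then show ?case
    using inc[of j] by (cases "i = j") (auto intro: less_trans)
qed simp

lemma less_double_cases:
  fixes a k :: nat
  assumes "a < 2 * k"
  obtains (low) "a < k" | (high) i where "i < k" "a = i + k"
  using assms by (cases "a < k") (auto intro: that(2)[of "a - k"])

lemma cross_scaled_eq:
  fixes a b x y :: real
  assumes "a * y = b * x" "a * x = b * y" "0 < x" "0 < y"
  shows "a = b" and "x \<noteq> y \<Longrightarrow> a = 0"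
proof -
  have "a * y * y = a * x * x"
    using assms(1,2) by (metis mult.assoc mult.commute)
  then have "a * ((y - x) * (y + x)) = 0"
    by (simp add: algebra_simps)
  moreover have "x \<noteq> y \<Longrightarrow> (y - x) * (y + x) \<noteq> 0"
    using assms(3,4) by simp
  ultimately show "x \<noteq> y \<Longrightarrow> a = 0" by simp
  then show "a = b"
    using assms by (cases "x = y") auto
qed

lemma diag2_mat_diag:
  "diag2 (mat_diag k \<nu>) = mat_diag (2 * k) (\<lambda>i. if i < k then \<nu> i else \<nu> (i - k))"
  by (rule eq_matI) (auto simp: diag2_def mat_diag_def)

lemma mult_diag2_index:
  assumes "B \<in> carrier_mat r (2 * k)" "a < r" "b < 2 * k"
  shows "(B * diag2 (mat_diag k \<nu>)) $$ (a, b) = B $$ (a, b) * (if b < k then \<nu> b else \<nu> (b - k))"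
  using assms unfolding diag2_mat_diag by (simp add: mat_diag_mult_right)

lemma mult_diag2_right_cancel:
  assumes B: "B \<in> carrier_mat r (2 * k)" and C: "C \<in> carrier_mat r (2 * k)"
    and eq: "B * diag2 (mat_diag k \<nu>) = C * diag2 (mat_diag k \<nu>)"
    and \<nu>: "\<And>i. i < k \<Longrightarrow> \<nu> i \<noteq> (0 :: real)"
  shows "B = C"
proof (rule eq_matI)
  fix a b assume "a < dim_row C" "b < dim_col C"
  then have a: "a < r" and b: "b < 2 * k" using C by auto
  have "(if b < k then \<nu> b else \<nu> (b - k)) \<noteq> 0" using \<nu> b by auto
  then show "B $$ (a, b) = C $$ (a, b)"
    using arg_cong[OF eq, of "\<lambda>A. A $$ (a, b)"] mult_diag2_index[OF B a b] mult_diag2_index[OF C a b]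
    by simp
qed (use B C in auto)

lemma skew2_carrier: "\<Delta> \<in> carrier_mat k k \<Longrightarrow> skew2 \<Delta> \<in> carrier_mat (2 * k) (2 * k)"
  unfolding skew2_def by (metis four_block_carrier_mat mult_2 uminus_carrier_iff_mat zero_carrier_mat carrier_matD)

lemma skew2_index:
  "\<Delta> \<in> carrier_mat k k \<Longrightarrow> a < 2 * k \<Longrightarrow> b < 2 * k \<Longrightarrow> skew2 \<Delta> $$ (a, b) =
    (if a < k then (if b < k then 0 else - \<Delta> $$ (a, b - k)) else (if b < k then \<Delta> $$ (a - k, b) else 0))"
  unfolding skew2_def by (subst index_mat_four_block) auto

lemma skew2_mult_diag2_skew:
  assumes \<Delta>: "\<Delta> \<in> carrier_mat k k" and dg: "diagonal_mat \<Delta>"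
  shows "transpose_mat (skew2 \<Delta> * diag2 (mat_diag k \<nu>)) = - (skew2 \<Delta> * diag2 (mat_diag k \<nu>))"
proof -
  have "\<Delta> $$ (j, i) * \<nu> i = \<Delta> $$ (i, j) * \<nu> j" if "i < k" "j < k" for i j
    using dg \<Delta> that unfolding diagonal_mat_def by (cases "i = j") auto
  moreover have "skew2 \<Delta> * diag2 (mat_diag k \<nu>) =
      mat (2 * k) (2 * k) (\<lambda>(a, b). skew2 \<Delta> $$ (a, b) * (if b < k then \<nu> b else \<nu> (b - k)))"
    unfolding diag2_mat_diag by (rule mat_diag_mult_right[OF skew2_carrier[OF \<Delta>]])
  ultimately show ?thesis
    by (intro eq_matI) (auto simp: skew2_index[OF \<Delta>])
qed

lemma col_mult_skew2:
  assumes B: "B \<in> carrier_mat r (2 * k)" and \<Delta>: "\<Delta> \<in> carrier_mat k k" and dg: "diagonal_mat \<Delta>"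
    and j: "j < k"
  shows "col (B * skew2 \<Delta>) j = \<Delta> $$ (j, j) \<cdot>\<^sub>v col B (j + k)"
    and "col (B * skew2 \<Delta>) (j + k) = (- \<Delta> $$ (j, j)) \<cdot>\<^sub>v col B j"
proof -
  note S = skew2_carrier[OF \<Delta>]
  have off: "\<Delta> $$ (i, j) = 0" if "i < k" "i \<noteq> j" for i
    using dg \<Delta> j that unfolding diagonal_mat_def by auto
  have entry: "(B * skew2 \<Delta>) $$ (a, c) = B $$ (a, c') * s"
    if "a < r" "c < 2 * k" "c' < 2 * k" "\<And>t. t < 2 * k \<Longrightarrow> skew2 \<Delta> $$ (t, c) = (if t = c' then s else 0)"
    for a c c' s
  proof -
    have "(B * skew2 \<Delta>) $$ (a, c) = (\<Sum>t = 0..<2 * k. B $$ (a, t) * skew2 \<Delta> $$ (t, c))"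
      using that B S by (simp add: scalar_prod_def)
    also have "\<dots> = (\<Sum>t = 0..<2 * k. if t = c' then B $$ (a, t) * s else 0)"
      using that by (intro sum.cong) auto
    finally show ?thesis using that by simp
  qed
  show "col (B * skew2 \<Delta>) j = \<Delta> $$ (j, j) \<cdot>\<^sub>v col B (j + k)"
  proof (rule eq_vecI)
    fix a assume "a < dim_vec (\<Delta> $$ (j, j) \<cdot>\<^sub>v col B (j + k))"
    then have a: "a < r" using B by simp
    have "(B * skew2 \<Delta>) $$ (a, j) = B $$ (a, j + k) * \<Delta> $$ (j, j)"
      using j off by (intro entry[OF a]) (auto simp: skew2_index[OF \<Delta>])
    then show "col (B * skew2 \<Delta>) j $ a = (\<Delta> $$ (j, j) \<cdot>\<^sub>v col B (j + k)) $ a"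
      using a j B S by simp
  qed (use B S in simp)
  show "col (B * skew2 \<Delta>) (j + k) = (- \<Delta> $$ (j, j)) \<cdot>\<^sub>v col B j"
  proof (rule eq_vecI)
    fix a assume "a < dim_vec ((- \<Delta> $$ (j, j)) \<cdot>\<^sub>v col B j)"
    then have a: "a < r" using B by simp
    have "(B * skew2 \<Delta>) $$ (a, j + k) = B $$ (a, j) * (- \<Delta> $$ (j, j))"
      using j off by (intro entry[OF a]) (auto simp: skew2_index[OF \<Delta>])
    then show "col (B * skew2 \<Delta>) (j + k) $ a = ((- \<Delta> $$ (j, j)) \<cdot>\<^sub>v col B j) $ a"
      using a j B S by simp
  qed (use B S in simp)
qed

lemma lagrange_equation_gram:
  assumes X: "X \<in> carrier_mat (2 * n) (2 * k)" and M: "M \<in> carrier_mat (2 * n) (2 * n)"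
    and N: "N \<in> carrier_mat (2 * k) (2 * k)" and L: "L \<in> carrier_mat (2 * k) (2 * k)"
    and XJX: "transpose_mat X * Jmat n * X = Jmat k" and eq: "M * X * N = Jmat n * X * L"
  shows "transpose_mat X * M * X * N = Jmat k * L"
proof -
  have XT: "transpose_mat X \<in> carrier_mat (2 * k) (2 * n)" using X by simp
  have "transpose_mat X * M * X * N = transpose_mat X * (M * X * N)"
    using assoc_mult_mat[OF mult_carrier_mat[OF XT M] X N] assoc_mult_mat[OF XT M mult_carrier_mat[OF X N]]
      assoc_mult_mat[OF M X N] by simp
  also have "\<dots> = transpose_mat X * (Jmat n * X * L)"
    unfolding eq ..
  also have "\<dots> = transpose_mat X * Jmat n * X * L"
    using assoc_mult_mat[OF mult_carrier_mat[OF XT Jmat_carrier] X L]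
      assoc_mult_mat[OF XT Jmat_carrier mult_carrier_mat[OF X L]] assoc_mult_mat[OF Jmat_carrier X L] by simp
  finally show ?thesis unfolding XJX .
qed

lemma lagrange_equation_entries:
  assumes A: "A \<in> carrier_mat (2 * k) (2 * k)" and L: "L \<in> carrier_mat (2 * k) (2 * k)"
    and eq: "A * diag2 (mat_diag k \<nu>) = Jmat k * L" and i: "i < k" and b: "b < 2 * k"
  shows "L $$ (i + k, b) = A $$ (i, b) * (if b < k then \<nu> b else \<nu> (b - k))"
    and "L $$ (i, b) = - (A $$ (i + k, b) * (if b < k then \<nu> b else \<nu> (b - k)))"
proof -
  have AN: "(Jmat k * L) $$ (a, b) = A $$ (a, b) * (if b < k then \<nu> b else \<nu> (b - k))"
    if "a < 2 * k" for a
    using mult_diag2_index[OF A that b, of \<nu>] unfolding eq .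
  have JL: "(Jmat k * L) $$ (a, b) = (if a < k then L $$ (a + k, b) else - L $$ (a - k, b))"
    if "a < 2 * k" for a
    using Jmat_mult_vec_index[OF col_carrier_vec[OF b L] that] that b L by simp
  show "L $$ (i + k, b) = A $$ (i, b) * (if b < k then \<nu> b else \<nu> (b - k))"
    using AN[of i] JL[of i] i by simp
  show "L $$ (i, b) = - (A $$ (i + k, b) * (if b < k then \<nu> b else \<nu> (b - k)))"
    using AN[of "i + k"] JL[of "i + k"] i by simp
qed

(* Through the Lagrange equation, skew-symmetry of L relates each entry of A to a mirrored entry
   scaled by nu_i and nu_j; positivity and distinctness of the nu_i then force the block form. *)
lemma
  assumes A: "A \<in> carrier_mat (2 * k) (2 * k)" and A_sym: "transpose_mat A = A"
    and L: "L \<in> carrier_mat (2 * k) (2 * k)" and L_skew: "transpose_mat L = - L"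
    and \<nu>_pos: "\<And>i. i < k \<Longrightarrow> 0 < \<nu> i" and \<nu>_inj: "inj_on \<nu> {..<k}"
    and eq: "A * diag2 (mat_diag k \<nu>) = Jmat k * L" and i: "i < k" and j: "j < k"
  shows gram_off_diagonal_block: "A $$ (i, j + k) = 0"
    and gram_diagonal_blocks_eq: "A $$ (i + k, j + k) = A $$ (i, j)"
    and gram_diagonal_block_diagonal: "i \<noteq> j \<Longrightarrow> A $$ (i, j) = 0"
proof -
  note L_by_A = lagrange_equation_entries[OF A L eq]
  have L_skew_idx: "L $$ (a, b) = - L $$ (b, a)" if "a < 2 * k" "b < 2 * k" for a b
    using arg_cong[OF L_skew, of "\<lambda>B. B $$ (b, a)"] that L by simp
  have A_sym_idx: "A $$ (a, b) = A $$ (b, a)" if "a < 2 * k" "b < 2 * k" for a b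
    using arg_cong[OF A_sym, of "\<lambda>B. B $$ (b, a)"] that A by simp
  let ?p = "A $$ (i, j + k)" and ?q = "A $$ (i + k, j)"
  have "?p * \<nu> j = - ?q * \<nu> i"
    using L_skew_idx[of "i + k" "j + k"] L_by_A(1)[of i "j + k"] L_by_A(1)[of j "i + k"]
      A_sym_idx[of j "i + k"] i j by simp
  moreover have "?p * \<nu> i = - ?q * \<nu> j"
    using L_skew_idx[of i j] L_by_A(2)[of i j] L_by_A(2)[of j i] A_sym_idx[of "j + k" i] i j by simp
  ultimately have "?p = - ?q" "\<nu> i \<noteq> \<nu> j \<Longrightarrow> ?p = 0"
    using cross_scaled_eq[of ?p "\<nu> j" "- ?q" "\<nu> i"] \<nu>_pos i j by auto
  moreover have "i = j \<Longrightarrow> ?q = ?p" using A_sym_idx[of "i + k" i] i by simp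
  ultimately show "?p = 0"
    using \<nu>_inj i j by (cases "i = j") (auto dest: inj_onD)
  let ?a = "A $$ (i, j)" and ?b = "A $$ (i + k, j + k)"
  have "?a * \<nu> j = ?b * \<nu> i"
    using L_skew_idx[of "i + k" j] L_by_A(1)[of i j] L_by_A(2)[of j "i + k"]
      A_sym_idx[of "j + k" "i + k"] i j by simp
  moreover have "?a * \<nu> i = ?b * \<nu> j"
    using L_skew_idx[of "j + k" i] L_by_A(1)[of j i] L_by_A(2)[of i "j + k"] A_sym_idx[of j i] i j by simp
  ultimately have "?a = ?b" "\<nu> i \<noteq> \<nu> j \<Longrightarrow> ?a = 0"
    using cross_scaled_eq[of ?a "\<nu> j" ?b "\<nu> i"] \<nu>_pos i j by auto
  then show "?b = ?a" "i \<noteq> j \<Longrightarrow> ?a = 0"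
    using \<nu>_inj i j by (auto dest: inj_onD)
qed

lemma lagrange_multiplier_index:
  assumes A: "A \<in> carrier_mat (2 * k) (2 * k)" and A_sym: "transpose_mat A = A"
    and L: "L \<in> carrier_mat (2 * k) (2 * k)" and L_skew: "transpose_mat L = - L"
    and \<nu>_pos: "\<And>i. i < k \<Longrightarrow> 0 < \<nu> i" and \<nu>_inj: "inj_on \<nu> {..<k}"
    and eq: "A * diag2 (mat_diag k \<nu>) = Jmat k * L" and a: "a < 2 * k" and b: "b < 2 * k"
  shows "L $$ (a, b) =
    skew2 (mat_diag k (\<lambda>i. A $$ (i, i))) $$ (a, b) * (if b < k then \<nu> b else \<nu> (b - k))"
proof -
  define \<Delta> where "\<Delta> = mat_diag k (\<lambda>i. A $$ (i, i))"
  have \<Delta>: "\<Delta> \<in> carrier_mat k k"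
    unfolding \<Delta>_def by simp
  have \<Delta>_idx: "\<Delta> $$ (i, j) = (if i = j then A $$ (i, j) else 0)" if "i < k" "j < k" for i j
    using that by (simp add: \<Delta>_def mat_diag_def)
  have A_sym_idx: "A $$ (r, c) = A $$ (c, r)" if "r < 2 * k" "c < 2 * k" for r c
    using arg_cong[OF A_sym, of "\<lambda>B. B $$ (c, r)"] that A by simp
  note L_by_A = lagrange_equation_entries[OF A L eq]
    and off = gram_off_diagonal_block[OF A A_sym L L_skew \<nu>_pos \<nu>_inj eq]
    and diag = gram_diagonal_blocks_eq[OF A A_sym L L_skew \<nu>_pos \<nu>_inj eq]
      gram_diagonal_block_diagonal[OF A A_sym L L_skew \<nu>_pos \<nu>_inj eq]
  have "L $$ (a, b) = skew2 \<Delta> $$ (a, b) * (if b < k then \<nu> b else \<nu> (b - k))"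
    using a
  proof (cases rule: less_double_cases)
    case low
    show ?thesis
      using b
    proof (cases rule: less_double_cases)
      case low
      then show ?thesis
        using \<open>a < k\<close> L_by_A(2)[OF \<open>a < k\<close> b] A_sym_idx[of "a + k" b] off[of b a]
        by (simp add: skew2_index[OF \<Delta>])
    next
      case (high j)
      then show ?thesis
        using \<open>a < k\<close> L_by_A(2)[OF \<open>a < k\<close> b] diag[of a j] \<Delta>_idx[of a j]
        by (auto simp: skew2_index[OF \<Delta>])
    qed
  next
    case i: (high i)
    show ?thesis
      using b
    proof (cases rule: less_double_cases)
      case low
      then show ?thesis
        using i L_by_A(1)[OF \<open>i < k\<close> b] diag[of i b] \<Delta>_idx[of i b]
        by (auto simp: skew2_index[OF \<Delta>])
    next
      case (high j)
      then show ?thesis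
        using i L_by_A(1)[OF \<open>i < k\<close> b] off[of i j]
        by (simp add: skew2_index[OF \<Delta>])
    qed
  qed
  then show ?thesis
    unfolding \<Delta>_def .
qed

lemma lagrange_multiplier_block_form:
  assumes A: "A \<in> carrier_mat (2 * k) (2 * k)" and A_sym: "transpose_mat A = A"
    and L: "L \<in> carrier_mat (2 * k) (2 * k)" and L_skew: "transpose_mat L = - L"
    and \<nu>_pos: "\<And>i. i < k \<Longrightarrow> 0 < \<nu> i" and \<nu>_inj: "inj_on \<nu> {..<k}"
    and eq: "A * diag2 (mat_diag k \<nu>) = Jmat k * L"
  shows "L = skew2 (mat_diag k (\<lambda>i. A $$ (i, i))) * diag2 (mat_diag k \<nu>)"
proof -
  let ?\<Delta> = "mat_diag k (\<lambda>i. A $$ (i, i))"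
  have "skew2 ?\<Delta> * diag2 (mat_diag k \<nu>) =
      mat (2 * k) (2 * k) (\<lambda>(a, b). skew2 ?\<Delta> $$ (a, b) * (if b < k then \<nu> b else \<nu> (b - k)))"
    unfolding diag2_mat_diag by (rule mat_diag_mult_right[OF skew2_carrier]) simp
  then show ?thesis
    using L lagrange_multiplier_index[OF assms] by (auto intro!: eq_matI)
qed

lemma symp_eigenvalue_of_eigenvector_set:
  assumes M: "sym_pos_def (2 * n) M" and k: "k \<le> n" and X: "X \<in> carrier_mat (2 * n) (2 * k)"
    and XJX: "transpose_mat X * Jmat n * X = Jmat k"
    and \<Delta>: "\<Delta> \<in> carrier_mat k k" and dg: "diagonal_mat \<Delta>" and MX: "M * X = Jmat n * X * skew2 \<Delta>"
    and j: "j < k"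
  shows "symp_eigenvalue n M (\<Delta> $$ (j, j))"
proof (rule symp_eigenvalue_of_pair[OF M])
  note Mc = sym_pos_defD(1)[OF M]
  have jk: "j < 2 * k" "j + k < 2 * k" using j by auto
  note JX = mult_carrier_mat[OF Jmat_carrier X]
  show "col X j \<in> carrier_vec (2 * n)" "col X (j + k) \<in> carrier_vec (2 * n)"
    using col_carrier_vec[OF _ X] jk by simp_all
  have "M *\<^sub>v col X j = col (M * X) j"
    by (rule col_mult2[OF Mc X jk(1), symmetric])
  also have "\<dots> = \<Delta> $$ (j, j) \<cdot>\<^sub>v col (Jmat n * X) (j + k)"
    unfolding MX by (rule col_mult_skew2(1)[OF JX \<Delta> dg j])
  also have "col (Jmat n * X) (j + k) = Jmat n *\<^sub>v col X (j + k)"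
    by (rule col_mult2[OF Jmat_carrier X jk(2)])
  finally show "M *\<^sub>v col X j = \<Delta> $$ (j, j) \<cdot>\<^sub>v (Jmat n *\<^sub>v col X (j + k))" .
  have "M *\<^sub>v col X (j + k) = col (M * X) (j + k)"
    by (rule col_mult2[OF Mc X jk(2), symmetric])
  also have "\<dots> = (- \<Delta> $$ (j, j)) \<cdot>\<^sub>v col (Jmat n * X) j"
    unfolding MX by (rule col_mult_skew2(2)[OF JX \<Delta> dg j])
  also have "col (Jmat n * X) j = Jmat n *\<^sub>v col X j"
    by (rule col_mult2[OF Jmat_carrier X jk(1)])
  finally show "M *\<^sub>v col X (j + k) = (- \<Delta> $$ (j, j)) \<cdot>\<^sub>v (Jmat n *\<^sub>v col X j)" .
  show "col X j \<bullet> (Jmat n *\<^sub>v col X (j + k)) = 1"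
    using index_transpose_mult_mult[OF X Jmat_carrier jk] XJX Jmat_index[OF jk] j by simp
  show "0 < n" using j k by simp
qed

lemma critical_point_eigenvector_equation:
  assumes M: "sym_pos_def (2 * n) M"
    and \<nu>_pos: "\<And>i. i < k \<Longrightarrow> 0 < \<nu> i" and \<nu>_inj: "inj_on \<nu> {..<k}"
    and X: "X \<in> carrier_mat (2 * n) (2 * k)" and XJX: "transpose_mat X * Jmat n * X = Jmat k"
    and L: "L \<in> carrier_mat (2 * k) (2 * k)" and L_skew: "transpose_mat L = - L"
    and eq: "M * X * diag2 (mat_diag k \<nu>) = Jmat n * X * L"
  obtains \<Delta> where "\<Delta> \<in> carrier_mat k k" "diagonal_mat \<Delta>" "M * X = Jmat n * X * skew2 \<Delta>"
proof -
  note Mc = sym_pos_defD(1)[OF M]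
  let ?N = "diag2 (mat_diag k \<nu>)"
  have N: "?N \<in> carrier_mat (2 * k) (2 * k)"
    unfolding diag2_mat_diag by simp
  define A where "A = transpose_mat X * M * X"
  define \<Delta> where "\<Delta> = mat_diag k (\<lambda>i. A $$ (i, i))"
  have A: "A \<in> carrier_mat (2 * k) (2 * k)" "transpose_mat A = A"
    unfolding A_def using X Mc transpose_gram_mat[OF X Mc sym_pos_defD(2)[OF M]] by auto
  have L_eq: "L = skew2 \<Delta> * ?N"
    unfolding \<Delta>_def using lagrange_multiplier_block_form[OF A L L_skew \<nu>_pos \<nu>_inj]
      lagrange_equation_gram[OF X Mc N L XJX eq] unfolding A_def by blast
  have \<Delta>: "\<Delta> \<in> carrier_mat k k" "diagonal_mat \<Delta>"
    unfolding \<Delta>_def by (auto simp: diagonal_mat_def mat_diag_def)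
  note JX = mult_carrier_mat[OF Jmat_carrier X] and S = skew2_carrier[OF \<Delta>(1)]
  have "M * X * ?N = Jmat n * X * (skew2 \<Delta> * ?N)"
    using eq L_eq by simp
  also have "\<dots> = Jmat n * X * skew2 \<Delta> * ?N"
    by (rule assoc_mult_mat[OF JX S N, symmetric])
  finally have "M * X = Jmat n * X * skew2 \<Delta>"
    by (rule mult_diag2_right_cancel[OF mult_carrier_mat[OF Mc X] mult_carrier_mat[OF JX S]])
      (use \<nu>_pos in \<open>simp add: less_imp_neq[symmetric]\<close>)
  with \<Delta> show ?thesis using that by blast
qed

lemma eigenvector_equation_critical_point:
  assumes X: "X \<in> carrier_mat (2 * n) (2 * k)"
    and \<Delta>: "\<Delta> \<in> carrier_mat k k" and dg: "diagonal_mat \<Delta>" and MX: "M * X = Jmat n * X * skew2 \<Delta>"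
  shows "\<exists>L. L \<in> carrier_mat (2 * k) (2 * k) \<and> transpose_mat L = - L \<and>
    M * X * diag2 (mat_diag k \<nu>) = Jmat n * X * L"
proof -
  have N: "diag2 (mat_diag k \<nu>) \<in> carrier_mat (2 * k) (2 * k)"
    unfolding diag2_mat_diag by simp
  have "M * X * diag2 (mat_diag k \<nu>) = Jmat n * X * (skew2 \<Delta> * diag2 (mat_diag k \<nu>))"
    unfolding MX by (rule assoc_mult_mat[OF mult_carrier_mat[OF Jmat_carrier X] skew2_carrier[OF \<Delta>] N])
  then show ?thesis
    using skew2_mult_diag2_skew[OF \<Delta> dg] mult_carrier_mat[OF skew2_carrier[OF \<Delta>] N]
    by (intro exI[of _ "skew2 \<Delta> * diag2 (mat_diag k \<nu>)"] conjI) simp_all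
qed

theorem theorem3p4:
  fixes n k :: nat and M X :: "real mat" and \<nu> :: "nat \<Rightarrow> real"
  assumes M: "sym_pos_def (2*n) M"
    and k: "1 \<le> k" "k \<le> n"
    and \<nu>pos: "0 < \<nu> 0"
    and \<nu>inc: "\<And>i. Suc i < k \<Longrightarrow> \<nu> i < \<nu> (Suc i)"
    and X: "X \<in> carrier_mat (2*n) (2*k)"
  shows "((transpose_mat X * Jmat n * X = Jmat k \<and>
           (\<exists>L. L \<in> carrier_mat (2*k) (2*k) \<and> transpose_mat L = - L \<and>
                M * X * diag2 (mat_diag k \<nu>) = Jmat n * X * L))
        \<longleftrightarrow>
         (transpose_mat X * Jmat n * X = Jmat k \<and>
          (\<exists>\<Delta>. \<Delta> \<in> carrier_mat k k \<and> diagonal_mat \<Delta> \<and>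
                (\<forall>j<k. symp_eigenvalue n M (\<Delta> $$ (j,j))) \<and>
                M * X = Jmat n * X * skew2 \<Delta>)))"
proof -
  have \<nu>_less: "\<nu> i < \<nu> j" if "i < j" "j < k" for i j
    using less_of_Suc_less[of k \<nu>, OF \<nu>inc that] .
  have \<nu>_pos: "0 < \<nu> i" if "i < k" for i
    using \<nu>pos \<nu>_less[of 0 i] that by (cases i) auto
  have \<nu>_inj: "inj_on \<nu> {..<k}"
    by (rule inj_onI) (metis \<nu>_less lessThan_iff linorder_neqE_nat less_irrefl)
  show ?thesis
  proof (intro iffI conjI; elim conjE exE)
    fix L assume XJX: "transpose_mat X * Jmat n * X = Jmat k"
      and L: "L \<in> carrier_mat (2 * k) (2 * k)" "transpose_mat L = - L"
      and eq: "M * X * diag2 (mat_diag k \<nu>) = Jmat n * X * L"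
    obtain \<Delta> where \<Delta>: "\<Delta> \<in> carrier_mat k k" "diagonal_mat \<Delta>"
      and MX: "M * X = Jmat n * X * skew2 \<Delta>"
      by (rule critical_point_eigenvector_equation[OF M \<nu>_pos \<nu>_inj X XJX L eq])
    show "\<exists>\<Delta>. \<Delta> \<in> carrier_mat k k \<and> diagonal_mat \<Delta> \<and>
        (\<forall>j<k. symp_eigenvalue n M (\<Delta> $$ (j, j))) \<and> M * X = Jmat n * X * skew2 \<Delta>"
      using symp_eigenvalue_of_eigenvector_set[OF M k(2) X XJX \<Delta> MX] \<Delta> MX
      by (intro exI[of _ \<Delta>] conjI allI impI) simp_all
  qed (assumption | rule eigenvector_equation_critical_point[OF X])+
qed

end
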